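(* Let $A=\bigoplus_k A_k$ and $B=\bigoplus_k B_k$ be graded Lie algebras and let $(\alpha,\beta)$ be a derivatively knitted pair of representations for $(A,B)$. Then the graded vector space $A\oplus B$ with grading $(A\oplus B)_k:=A_k\oplus B_k$ becomes a graded Lie algebra, denoted $A\oplus_{(\alpha,\beta)}B$, with the bracket (for homogeneous elements, extended bilinearly) $$[(a_1,b_1),(a_2,b_2)] := \Bigl([a_1,a_2] + \beta(b_1)a_2 - (-1)^{|b_2||a_1|}\beta(b_2)a_1,\ [b_1,b_2] + \alpha(a_1)b_2 - (-1)^{|a_2||b_1|}\alpha(a_2)b_1\Bigr).$$ That is, this bracket is bilinear, of degree $0$, graded anticommutative and satisfies the graded Jacobi identity.
   Context: All gradings are either by $\mathbb Z$ or by $\mathbb Z_2$ (the same for all objects considered); $|x|$ denotes the degree of a homogeneous element $x$. For a graded vector space $V$, $\mathrm{End}(V)$ denotes the graded Lie algebra of linear endomorphisms of $V$ (graded by degree), with the graded commutator $[S,T]=ST-(-1)^{|S||T|}TS$. A derivatively knitted pair of representations $(\alpha,\beta)$ for graded Lie algebras $(A,B)$ consists of graded Lie algebra homomorphisms (of degree $0$) $\alpha:A\to\mathrm{End}(B)$ and $\beta:B\to\mathrm{End}(A)$ such that for all homogeneous $a,a_1,a_2\in A$ and $b,b_1,b_2\in B$: $$\alpha(a)[b_1,b_2] = [\alpha(a)b_1,b_2] + (-1)^{|a||b_1|}[b_1,\alpha(a)b_2] - \Bigl((-1)^{|a||b_1|}\alpha(\beta(b_1)a)b_2 - (-1)^{(|a|+|b_1|)|b_2|}\alpha(\beta(b_2)a)b_1\Bigr),$$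 $$\beta(b)[a_1,a_2] = [\beta(b)a_1,a_2] + (-1)^{|b||a_1|}[a_1,\beta(b)a_2] - \Bigl((-1)^{|b||a_1|}\beta(\alpha(a_1)b)a_2 - (-1)^{(|b|+|a_1|)|a_2|}\beta(\alpha(a_2)b)a_1\Bigr).$$ For ungraded Lie algebras all degrees are taken to be $0$. *)

theory Defs
  imports Complex_Main "HOL-Library.Z2" "HOL-Library.Product_Plus"
begin

text \<open>A grading group is an abelian group together with the parity homomorphism
  to \<int>/2, which is all that enters the Koszul signs (-1)^(|x||y|).\<close>

class grading = ab_group_add +
  fixes gpar :: "'a \<Rightarrow> bool"
  assumes gpar_add: "gpar (x + y) = (gpar x \<noteq> gpar y)"

instantiation int :: grading
begin
definition gpar_int :: "int \<Rightarrow> bool" where "gpar_int x = odd x"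
instance by standard (auto simp: gpar_int_def)
end

instantiation bit :: grading
begin
definition gpar_bit :: "bit \<Rightarrow> bool" where "gpar_bit x = odd x"
instance by standard (auto simp: gpar_bit_def)
end

definition ksign :: "'d::grading \<Rightarrow> 'd \<Rightarrow> 'k::field" where
  "ksign d e = (if gpar d \<and> gpar e then -1 else 1)"

definition graded_space ::
  "('k::field \<Rightarrow> 'v::ab_group_add \<Rightarrow> 'v) \<Rightarrow> ('d::grading \<Rightarrow> 'v set) \<Rightarrow> bool" where
  "graded_space sc H \<longleftrightarrow>
     vector_space sc \<and>
     (\<forall>d. module.subspace sc (H d)) \<and>
     (\<forall>x. \<exists>!f. finite {d. f d \<noteq> 0} \<and> (\<forall>d. f d \<in> H d) \<and> x = sum f {d. f d \<noteq> 0})"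

definition bilinear_map ::
  "('k::field \<Rightarrow> 'u::ab_group_add \<Rightarrow> 'u) \<Rightarrow> ('k \<Rightarrow> 'v::ab_group_add \<Rightarrow> 'v)
   \<Rightarrow> ('k \<Rightarrow> 'w::ab_group_add \<Rightarrow> 'w) \<Rightarrow> ('u \<Rightarrow> 'v \<Rightarrow> 'w) \<Rightarrow> bool" where
  "bilinear_map s1 s2 s3 f \<longleftrightarrow>
     (\<forall>x. Vector_Spaces.linear s2 s3 (f x)) \<and> (\<forall>y. Vector_Spaces.linear s1 s3 (\<lambda>x. f x y))"

definition graded_lie_algebra ::
  "('k::field \<Rightarrow> 'v::ab_group_add \<Rightarrow> 'v) \<Rightarrow> ('d::grading \<Rightarrow> 'v set) \<Rightarrow> ('v \<Rightarrow> 'v \<Rightarrow> 'v) \<Rightarrow> bool" where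
  "graded_lie_algebra sc H br \<longleftrightarrow>
     graded_space sc H \<and>
     bilinear_map sc sc sc br \<and>
     (\<forall>i j x y. x \<in> H i \<longrightarrow> y \<in> H j \<longrightarrow> br x y \<in> H (i + j)) \<and>
     (\<forall>i j x y. x \<in> H i \<longrightarrow> y \<in> H j \<longrightarrow>
        br x y = - sc (ksign i j) (br y x)) \<and>
     (\<forall>i j l x y z. x \<in> H i \<longrightarrow> y \<in> H j \<longrightarrow> z \<in> H l \<longrightarrow>
        sc (ksign i l) (br x (br y z)) + sc (ksign j i) (br y (br z x))
          + sc (ksign l j) (br z (br x y)) = 0)"

definition graded_map_deg ::
  "('d::grading \<Rightarrow> 'v set) \<Rightarrow> ('d \<Rightarrow> 'w set) \<Rightarrow> 'd \<Rightarrow> ('v \<Rightarrow> 'w) \<Rightarrow> bool" where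
  "graded_map_deg HV HW d T \<longleftrightarrow> (\<forall>j x. x \<in> HV j \<longrightarrow> T x \<in> HW (j + d))"

text \<open>A graded Lie algebra homomorphism of degree 0 from (A, HA, brA) into the graded Lie
  algebra End(V) of linear endomorphisms of V (graded by degree, graded commutator).\<close>
definition graded_rep ::
  "('k::field \<Rightarrow> 'a::ab_group_add \<Rightarrow> 'a) \<Rightarrow> ('d::grading \<Rightarrow> 'a set) \<Rightarrow> ('a \<Rightarrow> 'a \<Rightarrow> 'a)
   \<Rightarrow> ('k \<Rightarrow> 'v::ab_group_add \<Rightarrow> 'v) \<Rightarrow> ('d \<Rightarrow> 'v set) \<Rightarrow> ('a \<Rightarrow> 'v \<Rightarrow> 'v) \<Rightarrow> bool" where
  "graded_rep sA HA brA sV HV \<rho> \<longleftrightarrow>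
     (\<forall>v. Vector_Spaces.linear sA sV (\<lambda>a. \<rho> a v)) \<and>
     (\<forall>a. Vector_Spaces.linear sV sV (\<rho> a)) \<and>
     (\<forall>i a. a \<in> HA i \<longrightarrow> graded_map_deg HV HV i (\<rho> a)) \<and>
     (\<forall>i j a1 a2 v. a1 \<in> HA i \<longrightarrow> a2 \<in> HA j \<longrightarrow>
        \<rho> (brA a1 a2) v = \<rho> a1 (\<rho> a2 v) - sV (ksign i j) (\<rho> a2 (\<rho> a1 v)))"

definition knitted_pair ::
  "('k::field \<Rightarrow> 'a::ab_group_add \<Rightarrow> 'a) \<Rightarrow> ('d::grading \<Rightarrow> 'a set) \<Rightarrow> ('a \<Rightarrow> 'a \<Rightarrow> 'a)
   \<Rightarrow> ('k \<Rightarrow> 'b::ab_group_add \<Rightarrow> 'b) \<Rightarrow> ('d \<Rightarrow> 'b set) \<Rightarrow> ('b \<Rightarrow> 'b \<Rightarrow> 'b)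
   \<Rightarrow> ('a \<Rightarrow> 'b \<Rightarrow> 'b) \<Rightarrow> ('b \<Rightarrow> 'a \<Rightarrow> 'a) \<Rightarrow> bool" where
  "knitted_pair sA HA brA sB HB brB \<alpha> \<beta> \<longleftrightarrow>
     graded_rep sA HA brA sB HB \<alpha> \<and>
     graded_rep sB HB brB sA HA \<beta> \<and>
     (\<forall>i j l a b1 b2. a \<in> HA i \<longrightarrow> b1 \<in> HB j \<longrightarrow> b2 \<in> HB l \<longrightarrow>
        \<alpha> a (brB b1 b2) =
          brB (\<alpha> a b1) b2 + sB (ksign i j) (brB b1 (\<alpha> a b2))
          - (sB (ksign i j) (\<alpha> (\<beta> b1 a) b2) - sB (ksign (i + j) l) (\<alpha> (\<beta> b2 a) b1))) \<and>
     (\<forall>i j l b a1 a2. b \<in> HB i \<longrightarrow> a1 \<in> HA j \<longrightarrow> a2 \<in> HA l \<longrightarrow>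
        \<beta> b (brA a1 a2) =
          brA (\<beta> b a1) a2 + sA (ksign i j) (brA a1 (\<beta> b a2))
          - (sA (ksign i j) (\<beta> (\<alpha> a1 b) a2) - sA (ksign (i + j) l) (\<beta> (\<alpha> a2 b) a1)))"

definition prod_scale :: "('k \<Rightarrow> 'a \<Rightarrow> 'a) \<Rightarrow> ('k \<Rightarrow> 'b \<Rightarrow> 'b) \<Rightarrow> 'k \<Rightarrow> 'a \<times> 'b \<Rightarrow> 'a \<times> 'b" where
  "prod_scale sA sB c p = (sA c (fst p), sB c (snd p))"

definition prod_grading :: "('d \<Rightarrow> 'a set) \<Rightarrow> ('d \<Rightarrow> 'b set) \<Rightarrow> 'd \<Rightarrow> ('a \<times> 'b) set" where
  "prod_grading HA HB d = HA d \<times> HB d"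

end

theory Submission
  imports Defs
begin

text \<open>On homogeneous elements the bracket is given by the stated formula; to extend it
  bilinearly, the Koszul sign (-1)^(|b||a|) in front of a mixed term is realised as a bilinear
  expression in the odd parts of a and b. Grading and graded anticommutativity then hold
  componentwise. The A-component of the graded Jacobiator is a sum of the Jacobiator of A,
  the representation property of \<beta> on brackets of B, the knitting identity for \<beta> and
  antisymmetry in A, and it cancels after a case split on the parities of the three degrees.
  The B-component is the same computation with the roles of (A, \<alpha>) and (B, \<beta>) exchanged.\<close>

lemma linear_simps:
  assumes "Vector_Spaces.linear s1 s2 f"
  shows "f (x + y) = f x + f y" "f (x - y) = f x - f y" "f (- x) = - f x" "f 0 = 0"
    "f (s1 c x) = s2 c (f x)"
proof -
  interpret module_hom s1 s2 f using assms by (simp add: module_hom_iff_linear)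
  show "f (x + y) = f x + f y" "f (x - y) = f x - f y" "f (- x) = - f x" "f 0 = 0"
    "f (s1 c x) = s2 c (f x)" by (rule add diff neg zero scale)+
qed

locale graded_vector_space =
  fixes sc :: "'k::field \<Rightarrow> 'v::ab_group_add \<Rightarrow> 'v" and H :: "'d::grading \<Rightarrow> 'v set"
  assumes graded_space: "graded_space sc H"
begin

lemma vector_space: "vector_space sc"
  using graded_space by (simp add: graded_space_def)

sublocale vector_space sc
  by (fact vector_space)

lemma subspace_homogeneous: "subspace (H d)"
  using graded_space by (simp add: graded_space_def)

lemma homogeneous_0: "0 \<in> H d"
  and homogeneous_add: "x \<in> H d \<Longrightarrow> y \<in> H d \<Longrightarrow> x + y \<in> H d"
  and homogeneous_diff: "x \<in> H d \<Longrightarrow> y \<in> H d \<Longrightarrow> x - y \<in> H d"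
  and homogeneous_scale: "x \<in> H d \<Longrightarrow> sc c x \<in> H d"
  using subspace_homogeneous
  by (auto intro: subspace_0 subspace_add subspace_diff subspace_scale)

definition decomposes :: "'v \<Rightarrow> ('d \<Rightarrow> 'v) \<Rightarrow> bool" where
  "decomposes x f \<longleftrightarrow> finite {d. f d \<noteq> 0} \<and> (\<forall>d. f d \<in> H d) \<and> x = sum f {d. f d \<noteq> 0}"

definition component :: "'v \<Rightarrow> 'd \<Rightarrow> 'v" where
  "component x = (THE f. decomposes x f)"

lemma ex1_decomposes: "\<exists>!f. decomposes x f"
  using graded_space unfolding graded_space_def decomposes_def by blast

lemma component_decomposes: "decomposes x (component x)"
  unfolding component_def using ex1_decomposes by (rule theI')

lemma finite_component_support: "finite {d. component x d \<noteq> 0}"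
  and component_in_homogeneous: "component x d \<in> H d"
  using component_decomposes by (auto simp: decomposes_def)

lemma sum_component:
  assumes "finite S" "{d. component x d \<noteq> 0} \<subseteq> S"
  shows "sum (component x) S = x"
proof -
  have "sum (component x) S = sum (component x) {d. component x d \<noteq> 0}"
    using assms by (intro sum.mono_neutral_right) auto
  then show ?thesis
    using component_decomposes by (simp add: decomposes_def)
qed

lemma component_eqI:
  assumes "finite S" "{d. f d \<noteq> 0} \<subseteq> S" "\<And>d. f d \<in> H d" "x = sum f S"
  shows "component x = f"
proof -
  have "sum f S = sum f {d. f d \<noteq> 0}"
    using assms(1,2) by (intro sum.mono_neutral_right) auto
  then have "decomposes x f"
    using assms finite_subset by (auto simp: decomposes_def)
  then show ?thesis
    using ex1_decomposes component_decomposes by blast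
qed

lemma component_homogeneous: "x \<in> H i \<Longrightarrow> component x = (\<lambda>d. if d = i then x else 0)"
  by (rule component_eqI[of "{i}"]) (auto simp: homogeneous_0)

lemma component_add: "component (x + y) = (\<lambda>d. component x d + component y d)"
proof (rule component_eqI)
  let ?S = "{d. component x d \<noteq> 0} \<union> {d. component y d \<noteq> 0}"
  show "finite ?S"
    by (simp add: finite_component_support)
  then show "x + y = (\<Sum>d\<in>?S. component x d + component y d)"
    by (simp add: sum.distrib sum_component)
qed (auto simp: homogeneous_add component_in_homogeneous)

lemma component_scale: "component (sc c x) = (\<lambda>d. sc c (component x d))"
proof (rule component_eqI)
  show "sc c x = (\<Sum>d\<in>{d. component x d \<noteq> 0}. sc c (component x d))"
    by (simp add: scale_sum_right[symmetric] sum_component finite_component_support)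
qed (auto simp: finite_component_support homogeneous_scale component_in_homogeneous)

definition odd_part :: "'v \<Rightarrow> 'v" where
  "odd_part x = (\<Sum>d\<in>{d. component x d \<noteq> 0}. if gpar d then component x d else 0)"

lemma odd_part_eq_sum:
  assumes "finite S" "{d. component x d \<noteq> 0} \<subseteq> S"
  shows "odd_part x = (\<Sum>d\<in>S. if gpar d then component x d else 0)"
  unfolding odd_part_def using assms by (intro sum.mono_neutral_left) auto

lemma odd_part_homogeneous: "x \<in> H i \<Longrightarrow> odd_part x = (if gpar i then x else 0)"
  by (subst odd_part_eq_sum[of "{i}"]) (auto simp: component_homogeneous)

lemma linear_odd_part: "Vector_Spaces.linear sc sc odd_part"
proof -
  have "odd_part (x + y) = odd_part x + odd_part y" for x y
  proof -
    let ?S = "{d. component x d \<noteq> 0} \<union> {d. component y d \<noteq> 0}"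
    have "finite ?S"
      by (simp add: finite_component_support)
    then show ?thesis
      by (subst (1 2 3) odd_part_eq_sum[of ?S])
        (auto simp: component_add sum.distrib[symmetric] intro: sum.cong)
  qed
  moreover have "odd_part (sc c x) = sc c (odd_part x)" for c x
    by (subst (1 2) odd_part_eq_sum[of "{d. component x d \<noteq> 0}"])
      (auto simp: finite_component_support component_scale scale_sum_right intro: sum.cong)
  ultimately show ?thesis
    by (simp add: Vector_Spaces.linear_iff vector_space)
qed

end

lemma vector_space_prod_scale:
  assumes "vector_space sA" "vector_space sB"
  shows "vector_space (prod_scale sA sB)"
proof -
  interpret A: vector_space sA by fact
  interpret B: vector_space sB by fact
  show ?thesis
    by unfold_locales (simp_all add: prod_scale_def A.scale_right_distrib B.scale_right_distrib
        A.scale_left_distrib B.scale_left_distrib)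
qed

lemma graded_space_prod_grading:
  assumes "graded_space sA HA" "graded_space sB HB"
  shows "graded_space (prod_scale sA sB) (prod_grading HA HB)"
proof -
  interpret A: graded_vector_space sA HA by unfold_locales fact
  interpret B: graded_vector_space sB HB by unfold_locales fact
  interpret P: vector_space "prod_scale sA sB"
    by (rule vector_space_prod_scale) unfold_locales
  have "P.subspace (prod_grading HA HB d)" for d
    unfolding P.subspace_def prod_grading_def prod_scale_def
    by (auto simp: zero_prod_def A.homogeneous_0 B.homogeneous_0 A.homogeneous_add B.homogeneous_add
        A.homogeneous_scale B.homogeneous_scale)
  moreover have "\<exists>!f. finite {d. f d \<noteq> 0} \<and> (\<forall>d. f d \<in> prod_grading HA HB d) \<and> x = sum f {d. f d \<noteq> 0}"
    for x :: "_ \<times> _"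
  proof
    let ?f = "\<lambda>d. (A.component (fst x) d, B.component (snd x) d)"
    let ?S = "{d. A.component (fst x) d \<noteq> 0} \<union> {d. B.component (snd x) d \<noteq> 0}"
    have support: "{d. ?f d \<noteq> 0} = ?S"
      by (auto simp: zero_prod_def)
    have "finite ?S"
      by (simp add: A.finite_component_support B.finite_component_support)
    moreover have "sum ?f ?S = x"
      using \<open>finite ?S\<close> by (simp add: sum_prod A.sum_component B.sum_component)
    ultimately show "finite {d. ?f d \<noteq> 0} \<and> (\<forall>d. ?f d \<in> prod_grading HA HB d) \<and> x = sum ?f {d. ?f d \<noteq> 0}"
      by (simp add: support prod_grading_def A.component_in_homogeneous B.component_in_homogeneous)
  next
    fix g
    assume g: "finite {d. g d \<noteq> 0} \<and> (\<forall>d. g d \<in> prod_grading HA HB d) \<and> x = sum g {d. g d \<noteq> 0}"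
    have "A.component (fst x) = (\<lambda>d. fst (g d))"
      using g by (intro A.component_eqI[of "{d. g d \<noteq> 0}"])
        (auto simp: zero_prod_def prod_grading_def mem_Times_iff fst_sum)
    moreover have "B.component (snd x) = (\<lambda>d. snd (g d))"
      using g by (intro B.component_eqI[of "{d. g d \<noteq> 0}"])
        (auto simp: zero_prod_def prod_grading_def mem_Times_iff snd_sum)
    ultimately show "g = (\<lambda>d. (A.component (fst x) d, B.component (snd x) d))"
      by simp
  qed
  ultimately show ?thesis
    unfolding graded_space_def using P.vector_space_axioms by blast
qed

lemma graded_lie_algebraD:
  assumes "graded_lie_algebra sc H br"
  shows "graded_space sc H"
    and "Vector_Spaces.linear sc sc (\<lambda>x. br x y)" "Vector_Spaces.linear sc sc (br x)"
    and "x \<in> H i \<Longrightarrow> y \<in> H j \<Longrightarrow> br x y \<in> H (i + j)"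
    and "x \<in> H i \<Longrightarrow> y \<in> H j \<Longrightarrow> br x y = - sc (ksign i j) (br y x)"
    and "x \<in> H i \<Longrightarrow> y \<in> H j \<Longrightarrow> z \<in> H l \<Longrightarrow>
      sc (ksign i l) (br x (br y z)) + sc (ksign j i) (br y (br z x))
        + sc (ksign l j) (br z (br x y)) = 0"
  using assms unfolding graded_lie_algebra_def bilinear_map_def by (elim conjE; metis)+

lemma graded_repD:
  assumes "graded_rep sA HA brA sV HV \<rho>"
  shows "Vector_Spaces.linear sA sV (\<lambda>a. \<rho> a v)" "Vector_Spaces.linear sV sV (\<rho> a)"
    and "a \<in> HA i \<Longrightarrow> v \<in> HV j \<Longrightarrow> \<rho> a v \<in> HV (j + i)"
    and "a1 \<in> HA i \<Longrightarrow> a2 \<in> HA j \<Longrightarrow>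
      \<rho> (brA a1 a2) v = \<rho> a1 (\<rho> a2 v) - sV (ksign i j) (\<rho> a2 (\<rho> a1 v))"
  using assms unfolding graded_rep_def graded_map_deg_def by (elim conjE; metis)+

text \<open>When p and q are the odd-part projections, this is the bilinear extension of
  (x, y) \<mapsto> (-1)^(|x||y|) f x y: only the odd-odd part changes sign.\<close>
definition koszul_twist :: "('u \<Rightarrow> 'v \<Rightarrow> 'w::ab_group_add) \<Rightarrow> ('u \<Rightarrow> 'u) \<Rightarrow> ('v \<Rightarrow> 'v) \<Rightarrow> 'u \<Rightarrow> 'v \<Rightarrow> 'w" where
  "koszul_twist f p q x y = f x y - f (p x) (q y) - f (p x) (q y)"

locale knitted_lie_algebras =
  fixes sA :: "'k::field \<Rightarrow> 'a::ab_group_add \<Rightarrow> 'a"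
    and sB :: "'k \<Rightarrow> 'b::ab_group_add \<Rightarrow> 'b"
    and HA :: "'d::grading \<Rightarrow> 'a set" and HB :: "'d \<Rightarrow> 'b set"
    and brA :: "'a \<Rightarrow> 'a \<Rightarrow> 'a" and brB :: "'b \<Rightarrow> 'b \<Rightarrow> 'b"
    and \<alpha> :: "'a \<Rightarrow> 'b \<Rightarrow> 'b" and \<beta> :: "'b \<Rightarrow> 'a \<Rightarrow> 'a"
  assumes lie_A: "graded_lie_algebra sA HA brA"
    and lie_B: "graded_lie_algebra sB HB brB"
    and knitted: "knitted_pair sA HA brA sB HB brB \<alpha> \<beta>"
begin

sublocale A: graded_vector_space sA HA
  by unfold_locales (rule graded_lie_algebraD(1)[OF lie_A])

sublocale B: graded_vector_space sB HB
  by unfold_locales (rule graded_lie_algebraD(1)[OF lie_B])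

lemma knitted_lie_algebras_swap: "knitted_lie_algebras sB sA HB HA brB brA \<beta> \<alpha>"
  using lie_A lie_B knitted by unfold_locales (simp_all add: knitted_pair_def)

lemma rep_\<alpha>: "graded_rep sA HA brA sB HB \<alpha>"
  and rep_\<beta>: "graded_rep sB HB brB sA HA \<beta>"
  using knitted by (simp_all add: knitted_pair_def)

lemmas brA_homogeneous = graded_lie_algebraD(4)[OF lie_A]
  and brA_anticomm = graded_lie_algebraD(5)[OF lie_A]
  and brA_jacobi = graded_lie_algebraD(6)[OF lie_A]
  and brB_homogeneous = graded_lie_algebraD(4)[OF lie_B]
  and brB_anticomm = graded_lie_algebraD(5)[OF lie_B]
  and \<alpha>_homogeneous = graded_repD(3)[OF rep_\<alpha>]
  and \<beta>_homogeneous = graded_repD(3)[OF rep_\<beta>]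
  and \<beta>_bracket = graded_repD(4)[OF rep_\<beta>]

lemma \<beta>_knitted: "b \<in> HB i \<Longrightarrow> a1 \<in> HA j \<Longrightarrow> a2 \<in> HA l \<Longrightarrow>
    \<beta> b (brA a1 a2) =
      brA (\<beta> b a1) a2 + sA (ksign i j) (brA a1 (\<beta> b a2))
      - (sA (ksign i j) (\<beta> (\<alpha> a1 b) a2) - sA (ksign (i + j) l) (\<beta> (\<alpha> a2 b) a1))"
  using knitted unfolding knitted_pair_def by (elim conjE; metis)

lemmas linearity_simps =
  linear_simps[OF graded_lie_algebraD(2)[OF lie_A], simplified]
  linear_simps[OF graded_lie_algebraD(3)[OF lie_A]]
  linear_simps[OF graded_lie_algebraD(2)[OF lie_B], simplified]
  linear_simps[OF graded_lie_algebraD(3)[OF lie_B]]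
  linear_simps[OF graded_repD(1)[OF rep_\<alpha>], simplified]
  linear_simps[OF graded_repD(2)[OF rep_\<alpha>]]
  linear_simps[OF graded_repD(1)[OF rep_\<beta>], simplified]
  linear_simps[OF graded_repD(2)[OF rep_\<beta>]]
  linear_simps[OF A.linear_odd_part]
  linear_simps[OF B.linear_odd_part]

definition bracket :: "'a \<times> 'b \<Rightarrow> 'a \<times> 'b \<Rightarrow> 'a \<times> 'b" where
  "bracket x y =
    (brA (fst x) (fst y) + \<beta> (snd x) (fst y) - koszul_twist \<beta> B.odd_part A.odd_part (snd y) (fst x),
     brB (snd x) (snd y) + \<alpha> (fst x) (snd y) - koszul_twist \<alpha> A.odd_part B.odd_part (fst y) (snd x))"

lemma koszul_twist_\<beta>: "a \<in> HA i \<Longrightarrow> b \<in> HB j \<Longrightarrow> koszul_twist \<beta> B.odd_part A.odd_part b a = sA (ksign j i) (\<beta> b a)"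
  by (auto simp: koszul_twist_def A.odd_part_homogeneous B.odd_part_homogeneous ksign_def linearity_simps)

lemma koszul_twist_\<alpha>: "a \<in> HA i \<Longrightarrow> b \<in> HB j \<Longrightarrow> koszul_twist \<alpha> A.odd_part B.odd_part a b = sB (ksign i j) (\<alpha> a b)"
  by (auto simp: koszul_twist_def A.odd_part_homogeneous B.odd_part_homogeneous ksign_def linearity_simps)

lemma bracket_homogeneous:
  assumes "x \<in> prod_grading HA HB i" "y \<in> prod_grading HA HB j"
  shows "bracket x y =
    (brA (fst x) (fst y) + \<beta> (snd x) (fst y) - sA (ksign j i) (\<beta> (snd y) (fst x)),
     brB (snd x) (snd y) + \<alpha> (fst x) (snd y) - sB (ksign j i) (\<alpha> (fst y) (snd x)))"
  using assms by (auto simp: bracket_def prod_grading_def koszul_twist_\<alpha> koszul_twist_\<beta>)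

lemma bracket_in_prod_grading:
  assumes "x \<in> prod_grading HA HB i" "y \<in> prod_grading HA HB j"
  shows "bracket x y \<in> prod_grading HA HB (i + j)"
proof -
  have x: "fst x \<in> HA i" "snd x \<in> HB i" and y: "fst y \<in> HA j" "snd y \<in> HB j"
    using assms by (auto simp: prod_grading_def)
  have "\<beta> (snd x) (fst y) \<in> HA (i + j)" "\<beta> (snd y) (fst x) \<in> HA (i + j)"
    and "\<alpha> (fst x) (snd y) \<in> HB (i + j)" "\<alpha> (fst y) (snd x) \<in> HB (i + j)"
    using \<beta>_homogeneous[OF x(2) y(1)] \<beta>_homogeneous[OF y(2) x(1)]
      \<alpha>_homogeneous[OF x(1) y(2)] \<alpha>_homogeneous[OF y(1) x(2)]
    by (simp_all add: add.commute)
  then show ?thesis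
    using x y
    by (auto simp: bracket_homogeneous[OF assms] prod_grading_def
        intro!: brA_homogeneous brB_homogeneous A.homogeneous_add A.homogeneous_diff A.homogeneous_scale
          B.homogeneous_add B.homogeneous_diff B.homogeneous_scale)
qed

lemma bracket_add_left: "bracket (x + y) z = bracket x z + bracket y z"
  by (simp add: bracket_def koszul_twist_def linearity_simps)

lemma bracket_add_right: "bracket x (y + z) = bracket x y + bracket x z"
  by (simp add: bracket_def koszul_twist_def linearity_simps)

lemma bracket_scale_left: "bracket (prod_scale sA sB c x) y = prod_scale sA sB c (bracket x y)"
  by (simp add: bracket_def koszul_twist_def prod_scale_def linearity_simps
      A.scale_right_distrib A.scale_right_diff_distrib B.scale_right_distrib B.scale_right_diff_distrib)

lemma bracket_scale_right: "bracket x (prod_scale sA sB c y) = prod_scale sA sB c (bracket x y)"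
  by (simp add: bracket_def koszul_twist_def prod_scale_def linearity_simps
      A.scale_right_distrib A.scale_right_diff_distrib B.scale_right_distrib B.scale_right_diff_distrib)

lemma bilinear_bracket: "bilinear_map (prod_scale sA sB) (prod_scale sA sB) (prod_scale sA sB) bracket"
  using vector_space_prod_scale[OF A.vector_space B.vector_space]
    bracket_add_left bracket_add_right bracket_scale_left bracket_scale_right
  unfolding bilinear_map_def Vector_Spaces.linear_iff by blast

lemma bracket_anticomm:
  assumes "x \<in> prod_grading HA HB i" "y \<in> prod_grading HA HB j"
  shows "bracket x y = - prod_scale sA sB (ksign i j) (bracket y x)"
proof -
  have "fst x \<in> HA i" "snd x \<in> HB i" "fst y \<in> HA j" "snd y \<in> HB j"
    using assms by (auto simp: prod_grading_def)
  then show ?thesis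
    using brA_anticomm[of "fst x" i "fst y" j] brB_anticomm[of "snd x" i "snd y" j]
    by (cases "gpar i"; cases "gpar j")
      (simp_all add: bracket_homogeneous[OF assms] bracket_homogeneous[OF assms(2,1)] prod_scale_def ksign_def)
qed

lemma fst_jacobiator:
  assumes x: "x \<in> prod_grading HA HB i" and y: "y \<in> prod_grading HA HB j"
    and z: "z \<in> prod_grading HA HB l"
  shows "sA (ksign i l) (fst (bracket x (bracket y z))) + sA (ksign j i) (fst (bracket y (bracket z x)))
    + sA (ksign l j) (fst (bracket z (bracket x y))) = 0"
proof -
  have hx: "fst x \<in> HA i" "snd x \<in> HB i" and hy: "fst y \<in> HA j" "snd y \<in> HB j"
    and hz: "fst z \<in> HA l" "snd z \<in> HB l"
    using assms by (auto simp: prod_grading_def)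
  show ?thesis
    unfolding bracket_homogeneous[OF x bracket_in_prod_grading[OF y z]]
      bracket_homogeneous[OF y bracket_in_prod_grading[OF z x]]
      bracket_homogeneous[OF z bracket_in_prod_grading[OF x y]]
    unfolding bracket_homogeneous[OF y z] bracket_homogeneous[OF z x] bracket_homogeneous[OF x y]
    using brA_jacobi[OF hx(1) hy(1) hz(1)]
      \<beta>_bracket[OF hy(2) hz(2), of "fst x"] \<beta>_bracket[OF hz(2) hx(2), of "fst y"]
      \<beta>_bracket[OF hx(2) hy(2), of "fst z"]
      \<beta>_knitted[OF hx(2) hy(1) hz(1)] \<beta>_knitted[OF hy(2) hz(1) hx(1)] \<beta>_knitted[OF hz(2) hx(1) hy(1)]
      brA_anticomm[OF \<beta>_homogeneous[OF hx(2) hy(1)] hz(1)]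
      brA_anticomm[OF \<beta>_homogeneous[OF hy(2) hz(1)] hx(1)]
      brA_anticomm[OF \<beta>_homogeneous[OF hz(2) hx(1)] hy(1)]
    by (cases "gpar i"; cases "gpar j"; cases "gpar l")
      (simp_all add: ksign_def gpar_add linearity_simps)
qed

lemma bracket_jacobi:
  assumes x: "x \<in> prod_grading HA HB i" and y: "y \<in> prod_grading HA HB j"
    and z: "z \<in> prod_grading HA HB l"
  shows "prod_scale sA sB (ksign i l) (bracket x (bracket y z))
    + prod_scale sA sB (ksign j i) (bracket y (bracket z x))
    + prod_scale sA sB (ksign l j) (bracket z (bracket x y)) = 0"
proof -
  interpret swapped: knitted_lie_algebras sB sA HB HA brB brA \<beta> \<alpha>
    by (fact knitted_lie_algebras_swap)
  have swap_bracket: "swapped.bracket (prod.swap u) (prod.swap v) = prod.swap (bracket u v)" for u v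
    by (simp add: bracket_def swapped.bracket_def)
  have swap_grading: "prod.swap u \<in> prod_grading HB HA d" if "u \<in> prod_grading HA HB d" for u d
    using that by (auto simp: prod_grading_def)
  have "sB (ksign i l) (snd (bracket x (bracket y z))) + sB (ksign j i) (snd (bracket y (bracket z x)))
    + sB (ksign l j) (snd (bracket z (bracket x y))) = 0"
    using swapped.fst_jacobiator[OF swap_grading[OF x] swap_grading[OF y] swap_grading[OF z]]
    by (simp add: swap_bracket)
  then show ?thesis
    using fst_jacobiator[OF assms] by (simp add: prod_scale_def prod_eq_iff)
qed

lemma graded_lie_algebra_bracket: "graded_lie_algebra (prod_scale sA sB) (prod_grading HA HB) bracket"
  unfolding graded_lie_algebra_def
  using graded_space_prod_grading[OF A.graded_space B.graded_space] bilinear_bracket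
    bracket_in_prod_grading bracket_anticomm bracket_jacobi
  by blast

end

theorem theorem1p2:
  fixes sA :: "'k::field \<Rightarrow> 'a::ab_group_add \<Rightarrow> 'a"
    and sB :: "'k \<Rightarrow> 'b::ab_group_add \<Rightarrow> 'b"
    and HA :: "'d::grading \<Rightarrow> 'a set" and HB :: "'d \<Rightarrow> 'b set"
    and brA :: "'a \<Rightarrow> 'a \<Rightarrow> 'a" and brB :: "'b \<Rightarrow> 'b \<Rightarrow> 'b"
    and \<alpha> :: "'a \<Rightarrow> 'b \<Rightarrow> 'b" and \<beta> :: "'b \<Rightarrow> 'a \<Rightarrow> 'a"
  assumes "graded_lie_algebra sA HA brA"
    and "graded_lie_algebra sB HB brB"
    and "knitted_pair sA HA brA sB HB brB \<alpha> \<beta>"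
  shows "\<exists>br. graded_lie_algebra (prod_scale sA sB) (prod_grading HA HB) br \<and>
    (\<forall>i j a1 b1 a2 b2. a1 \<in> HA i \<longrightarrow> b1 \<in> HB i \<longrightarrow> a2 \<in> HA j \<longrightarrow> b2 \<in> HB j \<longrightarrow>
       br (a1, b1) (a2, b2) =
         (brA a1 a2 + \<beta> b1 a2 - sA (ksign j i) (\<beta> b2 a1),
          brB b1 b2 + \<alpha> a1 b2 - sB (ksign j i) (\<alpha> a2 b1)))"
proof -
  interpret knitted_lie_algebras sA sB HA HB brA brB \<alpha> \<beta>
    by unfold_locales fact+
  have "bracket (a1, b1) (a2, b2) =
      (brA a1 a2 + \<beta> b1 a2 - sA (ksign j i) (\<beta> b2 a1),
       brB b1 b2 + \<alpha> a1 b2 - sB (ksign j i) (\<alpha> a2 b1))"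
    if "a1 \<in> HA i" "b1 \<in> HB i" "a2 \<in> HA j" "b2 \<in> HB j" for i j a1 b1 a2 b2
    using that by (simp add: bracket_homogeneous prod_grading_def)
  with graded_lie_algebra_bracket show ?thesis
    by blast
qed

end
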